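(* Let $k\in\mathbb Z_{\ge1}$. With probability $1-\mathrm{negl}(n)$ over $G\sim G(n,1/2)$ the following holds: for every vertex set $S\subseteq[n]$ of size $k$ and every family $\mathcal B\subseteq\{B:\emptyset\ne B\subseteq S\}$ there exists a vertex $v\notin S$ such that for every $\emptyset\ne B\subseteq S$, we have $B\in\mathcal B$ if and only if the number of vertices that are adjacent to every vertex in $\{v\}\cup B$ and non-adjacent to every vertex in $S\setminus B$ is odd.
   Context: $G(n,1/2)$ is the uniform distribution over simple graphs on vertex set $[n]$ (each pair an edge independently with probability $1/2$). A function is negligible ($\mathrm{negl}(n)$) if eventually below $1/p(n)$ in absolute value for every polynomial $p$. *)

theory Defs
  imports "HOL-Probability.Probability"
begin

text \<open>Vertex set [n] is rendered as {..<n}. A simple graph on [n] is a set of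
  2-element subsets of [n] (its edge set).\<close>

definition all_pairs :: "nat \<Rightarrow> nat set set" where
  "all_pairs n = {e. e \<subseteq> {..<n} \<and> card e = 2}"

text \<open>G(n,1/2): the uniform distribution over all edge sets, i.e. each pair is an
  edge independently with probability 1/2.\<close>

definition Gnp_half :: "nat \<Rightarrow> nat set set pmf" where
  "Gnp_half n = pmf_of_set (Pow (all_pairs n))"

definition adj :: "nat set set \<Rightarrow> nat \<Rightarrow> nat \<Rightarrow> bool" where
  "adj E u v \<longleftrightarrow> {u, v} \<in> E"

text \<open>Negligible: eventually below 1/p(n) in absolute value for every polynomial p;
  equivalently for every monomial n^c.\<close>

definition negl :: "(nat \<Rightarrow> real) \<Rightarrow> bool" where
  "negl f \<longleftrightarrow> (\<forall>c::nat. \<forall>\<^sub>F n in sequentially. \<bar>f n\<bar> < 1 / real n ^ c)"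

end

theory Submission
  imports Defs
begin

text \<open>Fix \<open>S\<close> with \<open>|S| = k\<close> and a family of nonempty subsets of \<open>S\<close>, and split the
  other \<open>n - k\<close> vertices into halves \<open>A\<close> and \<open>R\<close>. A vertex \<open>r \<in> R\<close> witnesses \<open>B \<subseteq> S\<close>
  if its neighbourhood in \<open>S\<close> is exactly \<open>B\<close>; a fixed \<open>B\<close> has no witness with probability
  \<open>(1 - 2\<^sup>-\<^sup>k)\<^bsup>|R|\<^esup>\<close>. Once every nonempty \<open>B\<close> has a witness \<open>r\<^sub>B\<close>, the edges between
  \<open>v \<in> A\<close> and the \<open>r\<^sub>B\<close> are still uniformly random, and adding the edge \<open>{v, r\<^sub>B}\<close> changes
  the parity of the count for \<open>B\<close> and of no other count. So exactly one of the \<open>2\<^bsup>2\<^sup>k - 1\<^esup>\<close>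
  choices of these edges makes \<open>v\<close> realize the family, and as different \<open>v\<close> use disjoint edge
  sets, all of \<open>A\<close> fails with probability at most \<open>(1 - 2\<^bsup>-2\<^sup>k\<^esup>)\<^bsup>|A|\<^esup>\<close>. A union
  bound over the at most \<open>n\<^sup>k 2\<^bsup>2\<^sup>k\<^esup>\<close> pairs (\<open>S\<close>, family) leaves a failure probability
  \<open>n\<^sup>k exp(-\<Omega>(n))\<close>, which is negligible.\<close>

section \<open>Uniformly random subsets of a finite set\<close>

definition subset_prob :: "'a set \<Rightarrow> ('a set \<Rightarrow> bool) \<Rightarrow> real" where
  "subset_prob U P = real (card {E \<in> Pow U. P E}) / 2 ^ card U"

lemma subset_prob_cong:
  "(\<And>E. E \<subseteq> U \<Longrightarrow> P E \<longleftrightarrow> Q E) \<Longrightarrow> subset_prob U P = subset_prob U Q"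
  unfolding subset_prob_def by (metis (mono_tags, lifting) Collect_cong PowD)

lemma subset_prob_False [simp]: "subset_prob U (\<lambda>E. False) = 0"
  by (simp add: subset_prob_def)

lemma subset_prob_True [simp]: "finite U \<Longrightarrow> subset_prob U (\<lambda>E. True) = 1"
  unfolding subset_prob_def by (simp add: card_Pow flip: Pow_def)

lemma subset_prob_nonneg: "subset_prob U P \<ge> 0"
  by (simp add: subset_prob_def)

lemma subset_prob_mono:
  assumes "finite U" "\<And>E. E \<subseteq> U \<Longrightarrow> P E \<Longrightarrow> Q E"
  shows "subset_prob U P \<le> subset_prob U Q"
proof -
  have "card {E \<in> Pow U. P E} \<le> card {E \<in> Pow U. Q E}"
    using assms by (intro card_mono) auto
  then show ?thesis
    unfolding subset_prob_def by (intro divide_right_mono) auto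
qed

lemma subset_prob_le_1: "finite U \<Longrightarrow> subset_prob U P \<le> 1"
  using subset_prob_mono[of U P "\<lambda>E. True"] by simp

lemma subset_prob_not:
  assumes "finite U"
  shows "subset_prob U (\<lambda>E. \<not> P E) = 1 - subset_prob U P"
proof -
  have "{E \<in> Pow U. \<not> P E} = Pow U - {E \<in> Pow U. P E}"
    by auto
  also have "card \<dots> = card (Pow U) - card {E \<in> Pow U. P E}"
    by (rule card_Diff_subset) (use assms in auto)
  finally have "card {E \<in> Pow U. \<not> P E} = card (Pow U) - card {E \<in> Pow U. P E}" .
  moreover have "card {E \<in> Pow U. P E} \<le> card (Pow U)"
    by (rule card_mono) (use assms in auto)
  ultimately have "real (card {E \<in> Pow U. \<not> P E}) = 2 ^ card U - real (card {E \<in> Pow U. P E})"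
    using assms by (simp add: card_Pow of_nat_diff)
  then show ?thesis
    unfolding subset_prob_def by (simp add: diff_divide_distrib)
qed

lemma subset_prob_Bex_le:
  assumes "finite I"
  shows "subset_prob U (\<lambda>E. \<exists>i\<in>I. P i E) \<le> (\<Sum>i\<in>I. subset_prob U (P i))"
proof -
  have "{E \<in> Pow U. \<exists>i\<in>I. P i E} = (\<Union>i\<in>I. {E \<in> Pow U. P i E})"
    by auto
  then have "card {E \<in> Pow U. \<exists>i\<in>I. P i E} \<le> (\<Sum>i\<in>I. card {E \<in> Pow U. P i E})"
    using card_UN_le[OF assms] by simp
  then have "real (card {E \<in> Pow U. \<exists>i\<in>I. P i E}) \<le> (\<Sum>i\<in>I. real (card {E \<in> Pow U. P i E}))"
    unfolding of_nat_sum[symmetric] of_nat_le_iff .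
  then show ?thesis
    unfolding subset_prob_def sum_divide_distrib[symmetric] by (rule divide_right_mono) simp
qed

lemma subset_prob_ge_witness:
  assumes "finite U" "E \<subseteq> U" "P E"
  shows "subset_prob U P \<ge> 1 / 2 ^ card U"
proof -
  have "{E \<in> Pow U. P E} \<noteq> {}" "finite {E \<in> Pow U. P E}"
    using assms by auto
  then have "card {E \<in> Pow U. P E} \<ge> 1"
    by (simp add: Suc_le_eq card_gt_0_iff)
  then show ?thesis
    unfolding subset_prob_def by (simp add: divide_right_mono)
qed

lemma subset_prob_singleton:
  assumes "E \<subseteq> U"
  shows "subset_prob U (\<lambda>E'. E' = E) = 1 / 2 ^ card U"
proof -
  have "{E' \<in> Pow U. E' = E} = {E}"
    using assms by auto
  then show ?thesis
    unfolding subset_prob_def by simp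
qed

lemma subset_prob_Un_disjoint:
  assumes "finite X" "finite Y" "X \<inter> Y = {}"
  shows "subset_prob (X \<union> Y) P = (\<Sum>a\<in>Pow X. subset_prob Y (\<lambda>b. P (a \<union> b))) / 2 ^ card X"
proof -
  let ?\<Sigma> = "SIGMA a:Pow X. {b \<in> Pow Y. P (a \<union> b)}"
  have split: "{E \<in> Pow (X \<union> Y). P E} = (\<lambda>(a, b). a \<union> b) ` ?\<Sigma>"
  proof (intro equalityI subsetI)
    fix E assume "E \<in> {E \<in> Pow (X \<union> Y). P E}"
    then have "E = (E \<inter> X) \<union> (E \<inter> Y)" "P E"
      by auto
    then show "E \<in> (\<lambda>(a, b). a \<union> b) ` ?\<Sigma>"
      by (intro image_eqI[of _ _ "(E \<inter> X, E \<inter> Y)"]) auto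
  qed auto
  have "inj_on (\<lambda>(a, b). a \<union> b) ?\<Sigma>"
  proof (rule inj_onI, clarsimp)
    fix a b a' b' assume "a \<subseteq> X" "b \<subseteq> Y" "a' \<subseteq> X" "b' \<subseteq> Y" "a \<union> b = a' \<union> b'"
    then show "a = a' \<and> b = b'"
      using assms(3) by blast
  qed
  then have "card {E \<in> Pow (X \<union> Y). P E} = (\<Sum>a\<in>Pow X. card {b \<in> Pow Y. P (a \<union> b)})"
    unfolding split using assms by (simp add: card_image card_SigmaI)
  then show ?thesis
    using assms unfolding subset_prob_def
    by (simp add: card_Un_disjoint power_add sum_divide_distrib field_simps)
qed

lemma subset_prob_Un_disjoint_le:
  assumes "finite X" "finite Y" "X \<inter> Y = {}" "c \<ge> 0"
    and "\<And>a. a \<subseteq> X \<Longrightarrow> \<not> Q a \<Longrightarrow> subset_prob Y (\<lambda>b. P (a \<union> b)) \<le> c"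
  shows "subset_prob (X \<union> Y) P \<le> subset_prob X Q + c"
proof -
  have "subset_prob (X \<union> Y) P \<le> (\<Sum>a\<in>Pow X. (if Q a then 1 else 0) + c) / 2 ^ card X"
    unfolding subset_prob_Un_disjoint[OF assms(1-3)]
  proof (intro divide_right_mono sum_mono)
    fix a assume "a \<in> Pow X"
    then show "subset_prob Y (\<lambda>b. P (a \<union> b)) \<le> (if Q a then 1 else 0) + c"
      using assms(4,5) subset_prob_le_1[OF assms(2), of "\<lambda>b. P (a \<union> b)"] by (cases "Q a") auto
  qed simp
  also have "\<dots> = subset_prob X Q + c"
    using assms(1) unfolding subset_prob_def
    by (simp add: sum.distrib sum.If_cases card_Pow field_simps Int_def)
  finally show ?thesis .
qed

lemma subset_prob_Un_disjoint_ge: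
  assumes "finite X" "finite Y" "X \<inter> Y = {}"
    and "\<And>a. a \<subseteq> X \<Longrightarrow> subset_prob Y (\<lambda>b. P (a \<union> b)) \<ge> c"
  shows "subset_prob (X \<union> Y) P \<ge> c"
proof -
  have "c = (\<Sum>a\<in>Pow X. c) / 2 ^ card X"
    using assms(1) by (simp add: card_Pow)
  also have "\<dots> \<le> subset_prob (X \<union> Y) P"
    unfolding subset_prob_Un_disjoint[OF assms(1-3)]
    using assms(4) by (intro divide_right_mono sum_mono) auto
  finally show ?thesis .
qed

lemma subset_prob_Un_disjoint_conj:
  assumes "finite X" "finite Y" "X \<inter> Y = {}"
  shows "subset_prob (X \<union> Y) (\<lambda>E. P (E \<inter> X) \<and> Q (E \<inter> Y)) = subset_prob X P * subset_prob Y Q"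
proof -
  have "subset_prob Y (\<lambda>b. P ((a \<union> b) \<inter> X) \<and> Q ((a \<union> b) \<inter> Y))
      = (if P a then subset_prob Y Q else 0)" if "a \<subseteq> X" for a
  proof -
    have "(a \<union> b) \<inter> X = a" "(a \<union> b) \<inter> Y = b" if "b \<subseteq> Y" for b
      using \<open>a \<subseteq> X\<close> that assms(3) by blast+
    then have "subset_prob Y (\<lambda>b. P ((a \<union> b) \<inter> X) \<and> Q ((a \<union> b) \<inter> Y))
        = subset_prob Y (\<lambda>b. P a \<and> Q b)"
      by (intro subset_prob_cong) simp
    then show ?thesis
      by (cases "P a") simp_all
  qed
  then have "subset_prob (X \<union> Y) (\<lambda>E. P (E \<inter> X) \<and> Q (E \<inter> Y))
      = (\<Sum>a\<in>Pow X. if P a then subset_prob Y Q else 0) / 2 ^ card X"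
    unfolding subset_prob_Un_disjoint[OF assms] by (intro arg_cong2[where f="(/)"] sum.cong) auto
  also have "\<dots> = subset_prob X P * subset_prob Y Q"
    using assms(1) unfolding subset_prob_def by (simp add: sum.If_cases Int_def)
  finally show ?thesis .
qed

lemma subset_prob_marginal:
  assumes "finite X" "finite Y" "X \<inter> Y = {}"
  shows "subset_prob (X \<union> Y) (\<lambda>E. Q (E \<inter> Y)) = subset_prob Y Q"
  using subset_prob_Un_disjoint_conj[OF assms, of "\<lambda>E. True" Q] assms(1) by simp

lemma subset_prob_UN_disjoint:
  assumes "finite I" "\<And>i. i \<in> I \<Longrightarrow> finite (Y i)"
    and "\<And>i j. i \<in> I \<Longrightarrow> j \<in> I \<Longrightarrow> i \<noteq> j \<Longrightarrow> Y i \<inter> Y j = {}"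
  shows "subset_prob (\<Union>i\<in>I. Y i) (\<lambda>E. \<forall>i\<in>I. P i (E \<inter> Y i)) = (\<Prod>i\<in>I. subset_prob (Y i) (P i))"
  using assms
proof (induction I rule: finite_induct)
  case empty
  then show ?case by (simp add: subset_prob_def)
next
  case (insert j I)
  let ?Q = "\<lambda>E. \<forall>i\<in>I. P i (E \<inter> Y i)"
  have "Y j \<inter> Y i = {}" if "i \<in> I" for i
    using insert.prems(2)[of j i] insert.hyps(2) that by auto
  then have disj: "Y j \<inter> (\<Union>i\<in>I. Y i) = {}"
    by blast
  have "subset_prob (\<Union>i\<in>insert j I. Y i) (\<lambda>E. \<forall>i\<in>insert j I. P i (E \<inter> Y i))
      = subset_prob (Y j \<union> (\<Union>i\<in>I. Y i)) (\<lambda>E. P j (E \<inter> Y j) \<and> ?Q (E \<inter> (\<Union>i\<in>I. Y i)))"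
  proof -
    have "E \<inter> (\<Union>i\<in>I. Y i) \<inter> Y i = E \<inter> Y i" if "i \<in> I" for E i
      using that by blast
    then show ?thesis
      unfolding UN_insert by (intro subset_prob_cong) simp
  qed
  also have "\<dots> = subset_prob (Y j) (P j) * subset_prob (\<Union>i\<in>I. Y i) ?Q"
    using insert.hyps(1) insert.prems(1)
    by (intro subset_prob_Un_disjoint_conj[of _ _ "P j" ?Q] disj) auto
  also have "subset_prob (\<Union>i\<in>I. Y i) ?Q = (\<Prod>i\<in>I. subset_prob (Y i) (P i))"
    by (rule insert.IH) (use insert.prems in auto)
  also have "subset_prob (Y j) (P j) * (\<Prod>i\<in>I. subset_prob (Y i) (P i))
      = (\<Prod>i\<in>insert j I. subset_prob (Y i) (P i))"
    using insert.hyps by simp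
  finally show ?case .
qed

lemma finite_all_pairs: "finite (all_pairs n)"
  unfolding all_pairs_def by (rule finite_subset[of _ "Pow {..<n}"]) auto

lemma doubleton_in_all_pairs: "a < n \<Longrightarrow> b < n \<Longrightarrow> a \<noteq> b \<Longrightarrow> {a, b} \<in> all_pairs n"
  unfolding all_pairs_def by auto

lemma measure_Gnp_half:
  "measure_pmf.prob (Gnp_half n) G = subset_prob (all_pairs n) (\<lambda>E. E \<in> G)"
  unfolding Gnp_half_def subset_prob_def using finite_all_pairs
  by (subst measure_pmf_of_set) (auto simp: card_Pow Int_def)

section \<open>Negligible functions\<close>

lemma tendsto_real_pow_mult_power_0:
  fixes s :: real
  assumes "0 < s" "s < 1"
  shows "(\<lambda>n. real n ^ m * s ^ n) \<longlonglongrightarrow> 0"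
proof -
  define t where "t = root (Suc m) s"
  have t: "0 < t" "t < 1" "t ^ Suc m = s"
    using assms unfolding t_def by (auto simp: real_root_lt_1_iff simp del: power_Suc intro: real_root_pow_pos)
  have "(\<lambda>n. real n * t ^ n) \<longlonglongrightarrow> 0"
    by (rule powser_times_n_limit_0) (use t in simp)
  then have "(\<lambda>n. (real n * t ^ n) ^ Suc m) \<longlonglongrightarrow> 0"
    using tendsto_power[of _ 0 sequentially "Suc m"] by simp
  moreover have "(real n * t ^ n) ^ Suc m = real n ^ Suc m * s ^ n" for n
  proof -
    have "(real n * t ^ n) ^ Suc m = real n ^ Suc m * (t ^ Suc m) ^ n"
      by (simp only: power_mult_distrib power_mult[symmetric] mult.commute)
    then show ?thesis
      by (simp only: t(3))
  qed
  ultimately have lim: "(\<lambda>n. real n ^ Suc m * s ^ n) \<longlonglongrightarrow> 0"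
    by (simp only:)
  show ?thesis
  proof (rule tendsto_sandwich[OF _ _ tendsto_const lim])
    show "\<forall>\<^sub>F n in sequentially. 0 \<le> real n ^ m * s ^ n"
      using assms by simp
    show "\<forall>\<^sub>F n in sequentially. real n ^ m * s ^ n \<le> real n ^ Suc m * s ^ n"
      using eventually_ge_at_top[of 1]
      by eventually_elim (use assms in \<open>auto intro!: mult_right_mono power_increasing\<close>)
  qed
qed

lemma negl_if_tendsto_0:
  assumes "\<And>c. (\<lambda>n. f n * real n ^ c) \<longlonglongrightarrow> 0"
  shows "negl f"
  unfolding negl_def
proof
  fix c :: nat
  have "\<forall>\<^sub>F n in sequentially. \<bar>f n * real n ^ c\<bar> < 1"
    using order_tendstoD(2)[OF tendsto_rabs[OF assms[of c]]] by simp
  then show "\<forall>\<^sub>F n in sequentially. \<bar>f n\<bar> < 1 / real n ^ c"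
  proof (rule eventually_mono[OF eventually_conj[OF _ eventually_ge_at_top[of 1]]])
    fix n :: nat assume "\<bar>f n * real n ^ c\<bar> < 1 \<and> 1 \<le> n"
    then show "\<bar>f n\<bar> < 1 / real n ^ c"
      by (simp add: abs_mult field_simps)
  qed
qed

lemma power2_power_half_diff_le:
  fixes \<sigma> :: real
  assumes "0 < \<sigma>" "\<sigma> < 1"
  shows "(\<sigma>\<^sup>2) ^ ((n - k) div 2) \<le> \<sigma> ^ n / \<sigma> ^ (k + 1)"
proof -
  have "(\<sigma>\<^sup>2) ^ ((n - k) div 2) = \<sigma> ^ (2 * ((n - k) div 2))"
    by (simp add: power_mult)
  also have "\<dots> \<le> \<sigma> ^ (n - k - 1)"
    using assms by (intro power_decreasing) auto
  also have "\<dots> = \<sigma> ^ (n - k - 1 + (k + 1)) / \<sigma> ^ (k + 1)"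
    using assms by (simp add: power_add)
  also have "\<dots> \<le> \<sigma> ^ n / \<sigma> ^ (k + 1)"
    using assms by (intro divide_right_mono power_decreasing) auto
  finally show ?thesis .
qed

lemma negl_if_le_poly_times_power:
  fixes f :: "nat \<Rightarrow> real" and \<rho> :: real
  assumes "\<And>n. 0 \<le> f n" "\<And>n. f n \<le> C * real n ^ k * \<rho> ^ ((n - k) div 2)"
    and "0 \<le> C" "0 < \<rho>" "\<rho> < 1"
  shows "negl f"
proof (rule negl_if_tendsto_0)
  fix c
  define \<sigma> where "\<sigma> = sqrt \<rho>"
  have \<sigma>: "0 < \<sigma>" "\<sigma> < 1" "\<sigma>\<^sup>2 = \<rho>"
    using assms(4,5) unfolding \<sigma>_def by auto
  have "\<rho> ^ ((n - k) div 2) \<le> \<sigma> ^ n / \<sigma> ^ (k + 1)" for n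
    using power2_power_half_diff_le[OF \<sigma>(1,2)] \<sigma>(3) by simp
  then have bound: "f n * real n ^ c \<le> C / \<sigma> ^ (k + 1) * (real n ^ (k + c) * \<sigma> ^ n)" for n
  proof -
    have "f n * real n ^ c \<le> C * real n ^ k * \<rho> ^ ((n - k) div 2) * real n ^ c"
      using assms(2) by (rule mult_right_mono) simp
    also have "\<dots> \<le> C * real n ^ k * (\<sigma> ^ n / \<sigma> ^ (k + 1)) * real n ^ c"
      using \<open>\<And>n. \<rho> ^ ((n - k) div 2) \<le> \<sigma> ^ n / \<sigma> ^ (k + 1)\<close> assms(3)
      by (intro mult_right_mono mult_left_mono) auto
    also have "\<dots> = C / \<sigma> ^ (k + 1) * (real n ^ (k + c) * \<sigma> ^ n)"
      by (simp add: power_add)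
    finally show ?thesis .
  qed
  have lim: "(\<lambda>n. C / \<sigma> ^ (k + 1) * (real n ^ (k + c) * \<sigma> ^ n)) \<longlonglongrightarrow> 0"
    by (rule tendsto_mult_right_zero[OF tendsto_real_pow_mult_power_0[OF \<sigma>(1,2)]])
  show "(\<lambda>n. f n * real n ^ c) \<longlonglongrightarrow> 0"
  proof (rule tendsto_sandwich[OF _ _ tendsto_const lim])
    show "\<forall>\<^sub>F n in sequentially. 0 \<le> f n * real n ^ c"
      using assms(1) by simp
    show "\<forall>\<^sub>F n in sequentially. f n * real n ^ c \<le> C / \<sigma> ^ (k + 1) * (real n ^ (k + c) * \<sigma> ^ n)"
      using bound by simp
  qed
qed

section \<open>Parity patterns\<close>

definition nonempty_subsets :: "'a set \<Rightarrow> 'a set set" where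
  "nonempty_subsets S = {B. B \<noteq> {} \<and> B \<subseteq> S}"

lemma finite_nonempty_subsets: "finite S \<Longrightarrow> finite (nonempty_subsets S)"
  unfolding nonempty_subsets_def by (rule finite_subset[of _ "Pow S"]) auto

lemma card_nonempty_subsets_le: "finite S \<Longrightarrow> card (nonempty_subsets S) \<le> 2 ^ card S"
  using card_mono[of "Pow S" "nonempty_subsets S"] unfolding nonempty_subsets_def
  by (auto simp: card_Pow)

definition pattern_nbrs :: "nat \<Rightarrow> nat set set \<Rightarrow> nat set \<Rightarrow> nat set \<Rightarrow> nat \<Rightarrow> nat set" where
  "pattern_nbrs n E S B v =
     {w \<in> {..<n}. (\<forall>u\<in>insert v B. adj E w u) \<and> (\<forall>u\<in>S - B. \<not> adj E w u)}"

definition realizes :: "nat \<Rightarrow> nat set set \<Rightarrow> nat set \<Rightarrow> nat set set \<Rightarrow> nat \<Rightarrow> bool" where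
  "realizes n E S \<B> v \<longleftrightarrow>
     (\<forall>B\<in>nonempty_subsets S. B \<in> \<B> \<longleftrightarrow> odd (card (pattern_nbrs n E S B v)))"

definition pattern_witnesses :: "'a set set \<Rightarrow> 'a set \<Rightarrow> 'a set \<Rightarrow> 'a set \<Rightarrow> 'a set" where
  "pattern_witnesses E S B R = {w \<in> R. \<forall>s\<in>S. {w, s} \<in> E \<longleftrightarrow> s \<in> B}"

lemma inj_on_doubleton_pattern_witnesses:
  assumes "v \<notin> R" and r: "\<And>B. B \<in> nonempty_subsets S \<Longrightarrow> r B \<in> pattern_witnesses E S B R"
  shows "inj_on (\<lambda>B. {v, r B}) (nonempty_subsets S)"
proof (rule inj_onI)
  fix B B' assume B: "B \<in> nonempty_subsets S" "B' \<in> nonempty_subsets S" "{v, r B} = {v, r B'}"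
  have "r B \<in> R" "r B' \<in> R"
    using r[OF B(1)] r[OF B(2)] unfolding pattern_witnesses_def by auto
  then have "r B = r B'"
    using B(3) assms(1) unfolding doubleton_eq_iff by blast
  then have "s \<in> B \<longleftrightarrow> s \<in> B'" if "s \<in> S" for s
    using that r[OF B(1)] r[OF B(2)] unfolding pattern_witnesses_def by simp
  moreover have "B \<subseteq> S" "B' \<subseteq> S"
    using B(1,2) unfolding nonempty_subsets_def by auto
  ultimately show "B = B'"
    by blast
qed

lemma realizes_cong:
  assumes "\<And>w u. u \<in> insert v S \<Longrightarrow> {w, u} \<in> E \<longleftrightarrow> {w, u} \<in> E'"
  shows "realizes n E S \<B> v \<longleftrightarrow> realizes n E' S \<B> v"
proof -
  have "pattern_nbrs n E S B v = pattern_nbrs n E' S B v" if "B \<subseteq> S" for B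
    using assms that unfolding pattern_nbrs_def adj_def by blast
  then show ?thesis
    unfolding realizes_def nonempty_subsets_def by simp
qed

lemma card_pattern_nbrs_add_edges:
  assumes "v \<notin> S" "B \<subseteq> S" "T \<subseteq> Pow S"
    and r: "\<And>B'. B' \<in> T \<Longrightarrow>
      r B' < n \<and> r B' \<notin> insert v S \<and> {v, r B'} \<notin> E \<and> (\<forall>s\<in>S. {r B', s} \<in> E \<longleftrightarrow> s \<in> B')"
  shows "card (pattern_nbrs n (E \<union> (\<lambda>B'. {v, r B'}) ` T) S B v)
    = card (pattern_nbrs n E S B v) + (if B \<in> T then 1 else 0)"
proof -
  let ?E' = "E \<union> (\<lambda>B'. {v, r B'}) ` T"
  have adj_S: "adj ?E' w u \<longleftrightarrow> adj E w u" if "u \<in> S" for w u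
    using that r assms(1) unfolding adj_def by (auto simp: doubleton_eq_iff)
  have adj_v: "adj ?E' w v \<longleftrightarrow> adj E w v \<or> (\<exists>B'\<in>T. w = r B')" for w
    using r unfolding adj_def by (auto simp: doubleton_eq_iff insert_commute)
  have pattern_r: "(\<forall>u\<in>B. adj E (r B') u) \<and> (\<forall>u\<in>S - B. \<not> adj E (r B') u) \<longleftrightarrow> B' = B"
    if "B' \<in> T" for B'
    using that r[of B'] assms(2,3) unfolding adj_def by blast
  have "w \<in> pattern_nbrs n ?E' S B v \<longleftrightarrow> w \<in> pattern_nbrs n E S B v \<or> (B \<in> T \<and> w = r B)" for w
  proof -
    have "w \<in> pattern_nbrs n ?E' S B v \<longleftrightarrow>
        w < n \<and> (adj E w v \<or> (\<exists>B'\<in>T. w = r B')) \<and> (\<forall>u\<in>B. adj E w u) \<and> (\<forall>u\<in>S - B. \<not> adj E w u)"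
      unfolding pattern_nbrs_def using adj_S subsetD[OF assms(2)] by (auto simp: adj_v)
    also have "\<dots> \<longleftrightarrow> w \<in> pattern_nbrs n E S B v \<or> (B \<in> T \<and> w = r B)"
      unfolding pattern_nbrs_def using pattern_r r[of B] by auto
    finally show ?thesis .
  qed
  then have "pattern_nbrs n ?E' S B v = pattern_nbrs n E S B v \<union> (if B \<in> T then {r B} else {})"
    by auto
  moreover have "B \<in> T \<Longrightarrow> r B \<notin> pattern_nbrs n E S B v"
    using r[of B] unfolding pattern_nbrs_def adj_def by (auto simp: insert_commute)
  ultimately show ?thesis
    by (simp add: pattern_nbrs_def)
qed

lemma realizes_by_adding_edges:
  assumes "v \<notin> S"
    and r: "\<And>B. B \<in> nonempty_subsets S \<Longrightarrow>
      r B < n \<and> r B \<notin> insert v S \<and> {v, r B} \<notin> E \<and> (\<forall>s\<in>S. {r B, s} \<in> E \<longleftrightarrow> s \<in> B)"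
  shows "\<exists>T \<subseteq> nonempty_subsets S. realizes n (E \<union> (\<lambda>B. {v, r B}) ` T) S \<B> v"
proof -
  define T where
    "T = {B \<in> nonempty_subsets S. B \<in> \<B> \<longleftrightarrow> even (card (pattern_nbrs n E S B v))}"
  have "realizes n (E \<union> (\<lambda>B. {v, r B}) ` T) S \<B> v"
    unfolding realizes_def
  proof
    fix B assume B: "B \<in> nonempty_subsets S"
    have "card (pattern_nbrs n (E \<union> (\<lambda>B. {v, r B}) ` T) S B v)
        = card (pattern_nbrs n E S B v) + (if B \<in> T then 1 else 0)"
      using assms(1) B r by (intro card_pattern_nbrs_add_edges) (auto simp: T_def nonempty_subsets_def)
    then show "B \<in> \<B> \<longleftrightarrow> odd (card (pattern_nbrs n (E \<union> (\<lambda>B. {v, r B}) ` T) S B v))"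
      using B by (simp add: T_def)
  qed
  moreover have "T \<subseteq> nonempty_subsets S"
    by (auto simp: T_def)
  ultimately show ?thesis
    by blast
qed

definition parity_extension :: "nat \<Rightarrow> nat \<Rightarrow> nat set set \<Rightarrow> bool" where
  "parity_extension k n E \<longleftrightarrow>
     (\<forall>S. S \<subseteq> {..<n} \<and> card S = k \<longrightarrow>
       (\<forall>\<B> \<subseteq> nonempty_subsets S. \<exists>v\<in>{..<n}. v \<notin> S \<and> realizes n E S \<B> v))"

lemma parity_extension_iff:
  "parity_extension k n E \<longleftrightarrow> (\<forall>S. S \<subseteq> {..<n} \<and> card S = k \<longrightarrow>
     (\<forall>\<B>. \<B> \<subseteq> {B. B \<noteq> {} \<and> B \<subseteq> S} \<longrightarrow>
       (\<exists>v\<in>{..<n}. v \<notin> S \<and>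
          (\<forall>B. B \<noteq> {} \<and> B \<subseteq> S \<longrightarrow>
             (B \<in> \<B> \<longleftrightarrow>
              odd (card {w\<in>{..<n}. (\<forall>u\<in>insert v B. adj E w u) \<and> (\<forall>u\<in>S - B. \<not> adj E w u)}))))))"
  unfolding parity_extension_def realizes_def pattern_nbrs_def nonempty_subsets_def Ball_def mem_Collect_eq ..

section \<open>Realizing a family from one half of the vertices\<close>

definition edges_to :: "'a \<Rightarrow> 'a set \<Rightarrow> 'a set set" where
  "edges_to v R = (\<lambda>r. {v, r}) ` R"

definition cross_edges :: "'a set \<Rightarrow> 'a set \<Rightarrow> 'a set set" where
  "cross_edges A R = (\<Union>v\<in>A. edges_to v R)"

lemma finite_edges_to [simp]: "finite R \<Longrightarrow> finite (edges_to v R)"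
  by (simp add: edges_to_def)

lemma card_edges_to: "v \<notin> R \<Longrightarrow> card (edges_to v R) = card R"
  unfolding edges_to_def by (rule card_image) (auto simp: inj_on_def doubleton_eq_iff)

lemma edges_to_disjoint: "v \<notin> R \<Longrightarrow> v' \<notin> R \<Longrightarrow> v \<noteq> v' \<Longrightarrow> edges_to v R \<inter> edges_to v' R = {}"
  unfolding edges_to_def by (auto simp: doubleton_eq_iff)

lemma Int_edges_to_eq_iff:
  assumes "w \<notin> S" "B \<subseteq> S"
  shows "E \<inter> edges_to w S = edges_to w B \<longleftrightarrow> (\<forall>s\<in>S. {w, s} \<in> E \<longleftrightarrow> s \<in> B)"
proof -
  have "{w, s} \<in> edges_to w B \<longleftrightarrow> s \<in> B" if "s \<in> S" for s
    using assms that unfolding edges_to_def by (auto simp: doubleton_eq_iff)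
  then show ?thesis
    using assms(2) unfolding edges_to_def by blast
qed

lemma pattern_witnesses_eq_empty_iff:
  assumes "B \<subseteq> S" "R \<inter> S = {}"
  shows "pattern_witnesses E S B R = {} \<longleftrightarrow> (\<forall>w\<in>R. E \<inter> edges_to w S \<noteq> edges_to w B)"
proof -
  have "w \<notin> S" if "w \<in> R" for w
    using that assms(2) by blast
  then show ?thesis
    using Int_edges_to_eq_iff[OF _ assms(1)] unfolding pattern_witnesses_def by auto
qed

text \<open>\<open>A\<close> supplies the candidate vertices and \<open>R\<close> the witnesses. The edges between \<open>A\<close> and
  \<open>R\<close> are sampled after the remaining pairs \<open>base_pairs\<close>, which determine the witnesses.\<close>

locale vertex_split =
  fixes n :: nat and S A R :: "nat set"
  assumes S_sub: "S \<subseteq> {..<n}" and A_sub: "A \<subseteq> {..<n}" and R_sub: "R \<subseteq> {..<n}"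
    and disjoint: "A \<inter> S = {}" "R \<inter> S = {}" "A \<inter> R = {}"
begin

abbreviation base_pairs :: "nat set set" where
  "base_pairs \<equiv> all_pairs n - cross_edges A R"

lemma finite_S: "finite S" and finite_A: "finite A" and finite_R: "finite R"
  using S_sub A_sub R_sub by (auto intro: finite_subset)

lemma cross_edges_subset: "cross_edges A R \<subseteq> all_pairs n"
  using A_sub R_sub disjoint(3) unfolding cross_edges_def edges_to_def
  by (auto intro!: doubleton_in_all_pairs)

lemma notin_cross_edges: "u \<in> S \<Longrightarrow> {w, u} \<notin> cross_edges A R"
  using disjoint(1,2) unfolding cross_edges_def edges_to_def by (auto simp: doubleton_eq_iff)

lemma cross_edges_at: "v \<in> A \<Longrightarrow> {w, v} \<in> cross_edges A R \<Longrightarrow> {w, v} \<in> edges_to v R"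
  using disjoint(3) unfolding cross_edges_def edges_to_def by (auto simp: doubleton_eq_iff)

lemma prob_no_pattern_witness:
  assumes "B \<subseteq> S"
  shows "subset_prob base_pairs (\<lambda>x. pattern_witnesses x S B R = {}) = (1 - 1 / 2 ^ card S) ^ card R"
proof -
  define Z where "Z = (\<Union>w\<in>R. edges_to w S)"
  have "Z \<subseteq> base_pairs"
    using S_sub R_sub disjoint(2) unfolding Z_def edges_to_def
    by (auto intro!: doubleton_in_all_pairs simp: notin_cross_edges)
  then have split: "(base_pairs - Z) \<union> Z = base_pairs" and "finite Z"
    using finite_all_pairs finite_subset by blast+
  have "x \<inter> Z \<inter> edges_to w S = x \<inter> edges_to w S" if "w \<in> R" for x w
    using that unfolding Z_def by blast
  then have "pattern_witnesses x S B R = {} \<longleftrightarrow> (\<forall>w\<in>R. x \<inter> Z \<inter> edges_to w S \<noteq> edges_to w B)" for x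
    using pattern_witnesses_eq_empty_iff[OF assms disjoint(2)] by simp
  then have "subset_prob base_pairs (\<lambda>x. pattern_witnesses x S B R = {})
      = subset_prob ((base_pairs - Z) \<union> Z) (\<lambda>x. \<forall>w\<in>R. x \<inter> Z \<inter> edges_to w S \<noteq> edges_to w B)"
    unfolding split by simp
  also have "\<dots> = subset_prob Z (\<lambda>z. \<forall>w\<in>R. z \<inter> edges_to w S \<noteq> edges_to w B)"
    using finite_all_pairs \<open>finite Z\<close> by (intro subset_prob_marginal) auto
  also have "\<dots> = (\<Prod>w\<in>R. subset_prob (edges_to w S) (\<lambda>z. z \<noteq> edges_to w B))"
    unfolding Z_def using finite_R finite_S disjoint(2)
    by (intro subset_prob_UN_disjoint[where P="\<lambda>w z. z \<noteq> edges_to w B"] edges_to_disjoint) auto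
  also have "\<dots> = (\<Prod>w\<in>R. 1 - 1 / 2 ^ card S)"
  proof (rule prod.cong[OF refl])
    fix w assume "w \<in> R"
    then have "w \<notin> S" "edges_to w B \<subseteq> edges_to w S"
      using disjoint(2) assms unfolding edges_to_def by auto
    then show "subset_prob (edges_to w S) (\<lambda>z. z \<noteq> edges_to w B) = 1 - 1 / 2 ^ card S"
      using finite_S by (simp add: subset_prob_not subset_prob_singleton card_edges_to)
  qed
  finally show ?thesis
    by simp
qed

lemma witness_unaffected_by_edges_to:
  assumes x: "x \<subseteq> base_pairs" and v: "v \<in> A" and a: "a \<subseteq> edges_to v R" "{v, w} \<notin> a"
    and w: "w \<in> pattern_witnesses x S B R"
  shows "w < n \<and> w \<notin> insert v S \<and> {v, w} \<notin> x \<union> a \<and> (\<forall>s\<in>S. {w, s} \<in> x \<union> a \<longleftrightarrow> s \<in> B)"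
proof -
  have "w \<in> R" and pattern: "\<forall>s\<in>S. {w, s} \<in> x \<longleftrightarrow> s \<in> B"
    using w unfolding pattern_witnesses_def by auto
  have "{v, w} \<in> edges_to v R"
    unfolding edges_to_def using \<open>w \<in> R\<close> by (rule imageI)
  then have "{v, w} \<in> cross_edges A R"
    unfolding cross_edges_def using v by blast
  then have "{v, w} \<notin> x"
    using x by blast
  moreover have "{w, s} \<notin> a" if "s \<in> S" for s
  proof
    assume "{w, s} \<in> a"
    then obtain r where "r \<in> R" "{w, s} = {v, r}"
      using a unfolding edges_to_def by blast
    then show False
      using that v \<open>w \<in> R\<close> disjoint unfolding doubleton_eq_iff by blast
  qed
  ultimately show ?thesis
    using \<open>w \<in> R\<close> pattern a(2) R_sub disjoint v by auto
qed

lemma prob_realizes_on_witness_edges_ge: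
  assumes x: "x \<subseteq> base_pairs" and v: "v \<in> A"
    and r: "\<And>B. B \<in> nonempty_subsets S \<Longrightarrow> r B \<in> pattern_witnesses x S B R"
    and a: "a \<subseteq> edges_to v R - (\<lambda>B. {v, r B}) ` nonempty_subsets S"
  shows "subset_prob ((\<lambda>B. {v, r B}) ` nonempty_subsets S) (\<lambda>b. realizes n (x \<union> (a \<union> b)) S \<B> v)
    \<ge> 1 / 2 ^ card (nonempty_subsets S)"
proof -
  let ?D = "(\<lambda>B. {v, r B}) ` nonempty_subsets S"
  have "\<exists>T \<subseteq> nonempty_subsets S. realizes n ((x \<union> a) \<union> (\<lambda>B. {v, r B}) ` T) S \<B> v"
  proof (rule realizes_by_adding_edges)
    show "v \<notin> S"
      using v disjoint(1) by auto
    fix B assume B: "B \<in> nonempty_subsets S"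
    then have "{v, r B} \<in> ?D"
      by (rule imageI)
    then show "r B < n \<and> r B \<notin> insert v S \<and> {v, r B} \<notin> x \<union> a \<and>
        (\<forall>s\<in>S. {r B, s} \<in> x \<union> a \<longleftrightarrow> s \<in> B)"
      using a by (intro witness_unaffected_by_edges_to x v r[OF B]) auto
  qed
  then obtain T where "T \<subseteq> nonempty_subsets S"
    and realizes_T: "realizes n (x \<union> (a \<union> (\<lambda>B. {v, r B}) ` T)) S \<B> v"
    by (auto simp: Un_assoc)
  then have "(\<lambda>B. {v, r B}) ` T \<subseteq> ?D"
    by (intro image_mono)
  moreover have "v \<notin> R"
    using v disjoint(3) by blast
  then have "card ?D = card (nonempty_subsets S)"
    by (rule card_image[OF inj_on_doubleton_pattern_witnesses[OF _ r]])
  moreover have "finite ?D"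
    using finite_nonempty_subsets[OF finite_S] by simp
  ultimately show ?thesis
    using subset_prob_ge_witness[of ?D _ "\<lambda>b. realizes n (x \<union> (a \<union> b)) S \<B> v"] realizes_T by simp
qed

lemma prob_realizes_ge:
  assumes x: "x \<subseteq> base_pairs" and v: "v \<in> A"
    and wit: "\<And>B. B \<in> nonempty_subsets S \<Longrightarrow> pattern_witnesses x S B R \<noteq> {}"
  shows "subset_prob (edges_to v R) (\<lambda>z. realizes n (x \<union> z) S \<B> v)
    \<ge> 1 / 2 ^ card (nonempty_subsets S)"
proof -
  have "\<forall>B\<in>nonempty_subsets S. \<exists>w. w \<in> pattern_witnesses x S B R"
    using wit by blast
  then obtain r where r: "\<And>B. B \<in> nonempty_subsets S \<Longrightarrow> r B \<in> pattern_witnesses x S B R"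
    using bchoice by metis
  define D where "D = (\<lambda>B. {v, r B}) ` nonempty_subsets S"
  have "r ` nonempty_subsets S \<subseteq> R"
    using r unfolding pattern_witnesses_def by blast
  then have D_sub: "D \<subseteq> edges_to v R"
    unfolding D_def edges_to_def image_image[of "\<lambda>r. {v, r}" r, symmetric] by (rule image_mono)
  have "1 / 2 ^ card (nonempty_subsets S)
      \<le> subset_prob ((edges_to v R - D) \<union> D) (\<lambda>z. realizes n (x \<union> z) S \<B> v)"
  proof (rule subset_prob_Un_disjoint_ge)
    show "finite (edges_to v R - D)" "finite D"
      using finite_subset[OF D_sub] finite_R by auto
    fix a assume "a \<subseteq> edges_to v R - D"
    then show "1 / 2 ^ card (nonempty_subsets S) \<le> subset_prob D (\<lambda>b. realizes n (x \<union> (a \<union> b)) S \<B> v)"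
      unfolding D_def using prob_realizes_on_witness_edges_ge[OF x v r] by blast
  qed auto
  moreover have "(edges_to v R - D) \<union> D = edges_to v R"
    using D_sub by blast
  ultimately show ?thesis
    by simp
qed

lemma prob_no_realizer_given_witnesses:
  assumes x: "x \<subseteq> base_pairs"
    and wit: "\<And>B. B \<in> nonempty_subsets S \<Longrightarrow> pattern_witnesses x S B R \<noteq> {}"
  shows "subset_prob (cross_edges A R) (\<lambda>y. \<forall>v\<in>A. \<not> realizes n (x \<union> y) S \<B> v)
    \<le> (1 - 1 / 2 ^ card (nonempty_subsets S)) ^ card A"
proof -
  have "realizes n (x \<union> y) S \<B> v \<longleftrightarrow> realizes n (x \<union> (y \<inter> edges_to v R)) S \<B> v"
    if "y \<subseteq> cross_edges A R" "v \<in> A" for y v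
  proof (rule realizes_cong)
    fix w u assume "u \<in> insert v S"
    then show "{w, u} \<in> x \<union> y \<longleftrightarrow> {w, u} \<in> x \<union> (y \<inter> edges_to v R)"
      using that cross_edges_at[of v w] notin_cross_edges[of u w] by auto
  qed
  then have "subset_prob (cross_edges A R) (\<lambda>y. \<forall>v\<in>A. \<not> realizes n (x \<union> y) S \<B> v)
      = subset_prob (\<Union>v\<in>A. edges_to v R) (\<lambda>y. \<forall>v\<in>A. \<not> realizes n (x \<union> (y \<inter> edges_to v R)) S \<B> v)"
    unfolding cross_edges_def by (intro subset_prob_cong) auto
  also have "\<dots> = (\<Prod>v\<in>A. subset_prob (edges_to v R) (\<lambda>z. \<not> realizes n (x \<union> z) S \<B> v))"
    using finite_A finite_R disjoint(3)
    by (intro subset_prob_UN_disjoint[where P="\<lambda>v z. \<not> realizes n (x \<union> z) S \<B> v"] edges_to_disjoint)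
       auto
  also have "\<dots> \<le> (\<Prod>v\<in>A. 1 - 1 / 2 ^ card (nonempty_subsets S))"
  proof (rule prod_mono)
    fix v assume v: "v \<in> A"
    show "0 \<le> subset_prob (edges_to v R) (\<lambda>z. \<not> realizes n (x \<union> z) S \<B> v) \<and>
        subset_prob (edges_to v R) (\<lambda>z. \<not> realizes n (x \<union> z) S \<B> v)
          \<le> 1 - 1 / 2 ^ card (nonempty_subsets S)"
      using prob_realizes_ge[OF x v wit, of \<B>] subset_prob_le_1[OF finite_edges_to[OF finite_R]]
      by (simp add: subset_prob_nonneg subset_prob_not[OF finite_edges_to[OF finite_R]])
  qed
  finally show ?thesis
    by simp
qed

lemma prob_no_realizer_le:
  "subset_prob (all_pairs n) (\<lambda>E. \<forall>v\<in>A. \<not> realizes n E S \<B> v)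
    \<le> card (nonempty_subsets S) * (1 - 1 / 2 ^ card S) ^ card R
      + (1 - 1 / 2 ^ card (nonempty_subsets S)) ^ card A"
proof -
  have "subset_prob (base_pairs \<union> cross_edges A R) (\<lambda>E. \<forall>v\<in>A. \<not> realizes n E S \<B> v)
      \<le> subset_prob base_pairs (\<lambda>x. \<exists>B\<in>nonempty_subsets S. pattern_witnesses x S B R = {})
        + (1 - 1 / 2 ^ card (nonempty_subsets S)) ^ card A"
  proof (rule subset_prob_Un_disjoint_le)
    show "finite base_pairs" "finite (cross_edges A R)"
      using finite_all_pairs cross_edges_subset finite_subset by auto
    show "0 \<le> (1 - 1 / 2 ^ card (nonempty_subsets S) :: real) ^ card A"
      by simp
  qed (use prob_no_realizer_given_witnesses in auto)
  also have "base_pairs \<union> cross_edges A R = all_pairs n"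
    using cross_edges_subset by blast
  also have "subset_prob base_pairs (\<lambda>x. \<exists>B\<in>nonempty_subsets S. pattern_witnesses x S B R = {})
      \<le> (\<Sum>B\<in>nonempty_subsets S. subset_prob base_pairs (\<lambda>x. pattern_witnesses x S B R = {}))"
    using finite_S by (intro subset_prob_Bex_le finite_nonempty_subsets)
  also have "\<dots> = card (nonempty_subsets S) * (1 - 1 / 2 ^ card S) ^ card R"
    by (simp add: prob_no_pattern_witness nonempty_subsets_def)
  finally show ?thesis
    by simp
qed

end

section \<open>Union bound\<close>

lemma exists_half_without_realizer_le:
  assumes "S \<subseteq> {..<n}" "card S = k"
  shows "\<exists>A \<subseteq> {..<n} - S. \<forall>\<B>.
    subset_prob (all_pairs n) (\<lambda>E. \<forall>v\<in>A. \<not> realizes n E S \<B> v)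
      \<le> (2 ^ k + 1) * (1 - 1 / 2 ^ 2 ^ k) ^ ((n - k) div 2)"
proof -
  define m where "m = (n - k) div 2"
  define \<rho> :: real where "\<rho> = 1 - 1 / 2 ^ 2 ^ k"
  have "finite S"
    using assms(1) finite_subset by blast
  then have card_T: "card ({..<n} - S) = n - k"
    using assms by (simp add: card_Diff_subset)
  then obtain A where A: "A \<subseteq> {..<n} - S" "card A = m"
    using obtain_subset_with_card_n[of m "{..<n} - S"] unfolding m_def by auto
  define R where "R = {..<n} - S - A"
  interpret vertex_split n S A R
    using assms(1) A(1) unfolding R_def by unfold_locales auto
  have "card R = (n - k) - m"
    unfolding R_def using A card_T by (simp add: card_Diff_subset finite_A)
  then have "m \<le> card R"
    unfolding m_def by linarith
  have card_Bs: "card (nonempty_subsets S) \<le> 2 ^ k"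
    using card_nonempty_subsets_le[OF finite_S] assms(2) by simp
  have \<rho>_bound: "1 - 1 / 2 ^ j \<le> \<rho>" if "j \<le> 2 ^ k" for j
    using that unfolding \<rho>_def by (simp add: frac_le power_increasing)
  have "0 \<le> \<rho>" "\<rho> \<le> 1"
    unfolding \<rho>_def by auto
  have "(1 - 1 / 2 ^ card S) ^ card R \<le> \<rho> ^ card R"
    using \<rho>_bound[of k] assms(2) by (intro power_mono) (auto intro: less_imp_le)
  also have "\<dots> \<le> \<rho> ^ m"
    using \<open>m \<le> card R\<close> \<open>0 \<le> \<rho>\<close> \<open>\<rho> \<le> 1\<close> by (rule power_decreasing)
  finally have witness_bound: "real (card (nonempty_subsets S)) * (1 - 1 / 2 ^ card S) ^ card R \<le> 2 ^ k * \<rho> ^ m"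
    using card_Bs by (intro mult_mono) auto
  have realizer_bound: "(1 - 1 / 2 ^ card (nonempty_subsets S)) ^ card A \<le> \<rho> ^ m"
    unfolding A(2) by (rule power_mono[OF \<rho>_bound[OF card_Bs]]) simp
  have "subset_prob (all_pairs n) (\<lambda>E. \<forall>v\<in>A. \<not> realizes n E S \<B> v) \<le> (2 ^ k + 1) * \<rho> ^ m" for \<B>
    using prob_no_realizer_le[of \<B>] witness_bound realizer_bound by (simp add: algebra_simps)
  then show ?thesis
    using A(1) unfolding m_def \<rho>_def by blast
qed

lemma card_sets_and_families_le:
  "card (SIGMA S:{S. S \<subseteq> {..<n} \<and> card S = k}. Pow (nonempty_subsets S)) \<le> n ^ k * 2 ^ 2 ^ k"
proof -
  let ?SS = "{S. S \<subseteq> {..<n} \<and> card S = k}"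
  have fin: "finite ?SS" "\<And>S. S \<in> ?SS \<Longrightarrow> finite (Pow (nonempty_subsets S))"
    by (auto intro: finite_subset finite_nonempty_subsets)
  have "card (SIGMA S:?SS. Pow (nonempty_subsets S)) = (\<Sum>S\<in>?SS. 2 ^ card (nonempty_subsets S))"
    using fin by (simp add: card_SigmaI card_Pow)
  also have "\<dots> \<le> (\<Sum>S\<in>?SS. 2 ^ 2 ^ k)"
  proof (intro sum_mono power_increasing)
    fix S assume "S \<in> ?SS"
    then show "card (nonempty_subsets S) \<le> 2 ^ k"
      using card_nonempty_subsets_le[of S] finite_subset[of S "{..<n}"] by auto
  qed simp
  also have "\<dots> = (n choose k) * 2 ^ 2 ^ k"
    using n_subsets[of "{..<n}" k] by simp
  also have "\<dots> \<le> n ^ k * 2 ^ 2 ^ k"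
    by (cases "k \<le> n") (simp_all add: binomial_le_pow binomial_eq_0)
  finally show ?thesis .
qed

lemma not_parity_extension_imp:
  assumes "\<not> parity_extension k n E" and "\<And>S. S \<subseteq> {..<n} \<Longrightarrow> card S = k \<Longrightarrow> A S \<subseteq> {..<n} - S"
  shows "\<exists>i\<in>(SIGMA S:{S. S \<subseteq> {..<n} \<and> card S = k}. Pow (nonempty_subsets S)).
    \<forall>v\<in>A (fst i). \<not> realizes n E (fst i) (snd i) v"
proof -
  obtain S \<B> where "S \<subseteq> {..<n}" "card S = k" "\<B> \<subseteq> nonempty_subsets S"
    and "\<forall>v\<in>{..<n}. v \<in> S \<or> \<not> realizes n E S \<B> v"
    using assms(1) unfolding parity_extension_def by auto
  with assms(2)[of S] show ?thesis
    by (intro bexI[of _ "(S, \<B>)"]) auto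
qed

lemma prob_not_parity_extension_le:
  "1 - measure_pmf.prob (Gnp_half n) {E. parity_extension k n E}
    \<le> 2 ^ 2 ^ k * (2 ^ k + 1) * real n ^ k * (1 - 1 / 2 ^ 2 ^ k) ^ ((n - k) div 2)"
proof -
  let ?SS = "{S. S \<subseteq> {..<n} \<and> card S = k}"
  let ?I = "SIGMA S:?SS. Pow (nonempty_subsets S)"
  let ?c = "(2 ^ k + 1) * (1 - 1 / 2 ^ 2 ^ k) ^ ((n - k) div 2) :: real"
  have "\<forall>S\<in>?SS. \<exists>A \<subseteq> {..<n} - S. \<forall>\<B>.
      subset_prob (all_pairs n) (\<lambda>E. \<forall>v\<in>A. \<not> realizes n E S \<B> v) \<le> ?c"
    by (auto intro: exists_half_without_realizer_le)
  from bchoice[OF this] obtain A where A: "\<forall>S\<in>?SS. A S \<subseteq> {..<n} - S \<and> (\<forall>\<B>.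
      subset_prob (all_pairs n) (\<lambda>E. \<forall>v\<in>A S. \<not> realizes n E S \<B> v) \<le> ?c)" ..
  have "finite ?I"
    by (intro finite_SigmaI) (auto intro: finite_subset finite_nonempty_subsets)
  have "1 - measure_pmf.prob (Gnp_half n) {E. parity_extension k n E}
      = subset_prob (all_pairs n) (\<lambda>E. \<not> parity_extension k n E)"
    by (simp add: measure_Gnp_half subset_prob_not finite_all_pairs)
  also have "\<dots> \<le> subset_prob (all_pairs n) (\<lambda>E. \<exists>i\<in>?I. \<forall>v\<in>A (fst i). \<not> realizes n E (fst i) (snd i) v)"
    using A by (intro subset_prob_mono[OF finite_all_pairs] not_parity_extension_imp) auto
  also have "\<dots> \<le> (\<Sum>i\<in>?I. subset_prob (all_pairs n) (\<lambda>E. \<forall>v\<in>A (fst i). \<not> realizes n E (fst i) (snd i) v))"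
    using \<open>finite ?I\<close> by (rule subset_prob_Bex_le)
  also have "\<dots> \<le> (\<Sum>i\<in>?I. ?c)"
  proof (rule sum_mono)
    fix i assume "i \<in> ?I"
    then have "fst i \<in> ?SS"
      by auto
    then show "subset_prob (all_pairs n) (\<lambda>E. \<forall>v\<in>A (fst i). \<not> realizes n E (fst i) (snd i) v) \<le> ?c"
      using A by blast
  qed
  also have "\<dots> = real (card ?I) * ?c"
    by simp
  also have "\<dots> \<le> real (n ^ k * 2 ^ 2 ^ k) * ?c"
    using card_sets_and_families_le[of n k] by (intro mult_right_mono) (simp_all only: of_nat_le_iff, simp)
  finally show ?thesis
    by (simp add: algebra_simps)
qed

theorem mainTheorem13:
  fixes k :: nat
  assumes "k \<ge> 1"
  shows "\<exists>\<epsilon>. negl \<epsilon> \<and> (\<forall>n.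
    measure_pmf.prob (Gnp_half n)
      {E. \<forall>S. S \<subseteq> {..<n} \<and> card S = k \<longrightarrow>
            (\<forall>\<B>. \<B> \<subseteq> {B. B \<noteq> {} \<and> B \<subseteq> S} \<longrightarrow>
              (\<exists>v\<in>{..<n}. v \<notin> S \<and>
                 (\<forall>B. B \<noteq> {} \<and> B \<subseteq> S \<longrightarrow>
                    (B \<in> \<B> \<longleftrightarrow>
                     odd (card {w\<in>{..<n}. (\<forall>u\<in>insert v B. adj E w u) \<and>
                                          (\<forall>u\<in>S - B. \<not> adj E w u)})))))}
    \<ge> 1 - \<epsilon> n)"
proof -
  define \<epsilon> where "\<epsilon> n = 1 - measure_pmf.prob (Gnp_half n) {E. parity_extension k n E}" for n
  have "(2::real) \<le> 2 ^ 2 ^ k"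
    using power_increasing[of 1 "2 ^ k" "2::real"] by simp
  have "negl \<epsilon>"
  proof (rule negl_if_le_poly_times_power)
    show "0 \<le> \<epsilon> n" for n
      unfolding \<epsilon>_def by simp
    show "\<epsilon> n \<le> 2 ^ 2 ^ k * (2 ^ k + 1) * real n ^ k * (1 - 1 / 2 ^ 2 ^ k) ^ ((n - k) div 2)" for n
      unfolding \<epsilon>_def by (rule prob_not_parity_extension_le)
  qed (use \<open>(2::real) \<le> 2 ^ 2 ^ k\<close> in auto)
  show ?thesis
  proof (intro exI[of _ \<epsilon>] conjI allI)
    show "negl \<epsilon>"
      by fact
  qed (simp add: \<epsilon>_def parity_extension_iff)
qed

end
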